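(* Let $n\in\mathbb{N}$, $\tau\in(0,\infty)$, and let $\mu$ be a log-concave probability measure on $\mathbb{R}^n$ with density $\rho$ (with respect to Lebesgue measure on $\mathbb{R}^n$). Let $m_\rho=\max\rho$ and $K=\{x\in\mathbb{R}^n:\rho(x)\ge e^{-\tau}m_\rho\}$. Then $$1\le m_\rho\,c_n(\tau)\,|K|,\qquad c_n(\tau)=n\int_1^\infty t^{n-1}e^{-\tau t}\,dt+1,$$ where $|K|$ is the Lebesgue volume of $K$.
   Context: A log-concave probability measure on $\mathbb{R}^n$ with density $\rho$ means $\rho=e^{-V}$ for a convex function $V\colon\mathbb{R}^n\to(-\infty,+\infty]$. *)

theory Defs
  imports "HOL-Probability.Probability"
begin

definition ext_convex :: "('a::real_vector \<Rightarrow> ereal) \<Rightarrow> bool" where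
  "ext_convex V \<longleftrightarrow> (\<forall>x. V x \<noteq> -\<infinity>) \<and> convex {(x, y::real). V x \<le> ereal y}"

definition exp_neg_ereal :: "ereal \<Rightarrow> real" where
  "exp_neg_ereal v = (if v = \<infinity> then 0 else exp (- real_of_ereal v))"

definition log_concave_fun :: "('a::real_vector \<Rightarrow> real) \<Rightarrow> bool" where
  "log_concave_fun \<rho> \<longleftrightarrow> (\<exists>V. ext_convex V \<and> (\<forall>x. \<rho> x = exp_neg_ereal (V x)))"

end

theory Submission
  imports Defs "HOL-Real_Asymp.Real_Asymp"
begin

(* Write M = sup rho and K = {rho >= exp(-tau) M}. Log-concavity makes superlevel sets convex,
   and a homothety centred at a point where rho is almost M shows
   |{rho >= M exp(-tau t)}| <= t^n |K| for t >= 1, up to a factor tending to 1.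
   The layer-cake formula splits 1 = \<integral> rho into the levels above exp(-tau) M, contributing at
   most M (1 - exp(-tau)) |K|, and the levels M exp(-tau t) for t >= 1, contributing at most
   M |K| \<integral>_1^oo tau exp(-tau t) t^n dt = M |K| (exp(-tau) + n \<integral>_1^oo t^(n-1) exp(-tau t) dt).
   Integrability also forces rho to be bounded, so that M is finite. *)

lemma log_concave_fun_nonneg: "log_concave_fun \<rho> \<Longrightarrow> 0 \<le> \<rho> x"
  unfolding log_concave_fun_def exp_neg_ereal_def by auto

lemma log_concave_fun_powr_le:
  fixes \<rho> :: "'a::real_vector \<Rightarrow> real"
  assumes lc: "log_concave_fun \<rho>" and ab: "0 < a" "0 < b" and "a \<le> \<rho> x" "b \<le> \<rho> y"
    and l: "0 \<le> l" "l \<le> 1"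
  shows "a powr (1 - l) * b powr l \<le> \<rho> ((1 - l) *\<^sub>R x + l *\<^sub>R y)"
proof -
  obtain V where "ext_convex V" and \<rho>_eq: "\<And>x. \<rho> x = exp_neg_ereal (V x)"
    using lc unfolding log_concave_fun_def by blast
  then have finite: "\<And>x. V x \<noteq> -\<infinity>" and epi: "convex {(x, y::real). V x \<le> ereal y}"
    unfolding ext_convex_def by auto
  have le_minus_ln_iff: "r \<le> - ln c \<longleftrightarrow> c \<le> exp (- r)" if "0 < c" for r c :: real
    using that by (smt (verit, ccfv_threshold) exp_le_cancel_iff exp_ln)
  have V_le_iff: "V z \<le> ereal (- ln c) \<longleftrightarrow> c \<le> \<rho> z" if "0 < c" for z c
    using that finite[of z] by (cases "V z") (auto simp: \<rho>_eq exp_neg_ereal_def le_minus_ln_iff)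
  have "(x, - ln a) \<in> {(x, y). V x \<le> ereal y}" "(y, - ln b) \<in> {(x, y). V x \<le> ereal y}"
    using V_le_iff ab assms(4,5) by auto
  then have "(1 - l) *\<^sub>R (x, - ln a) + l *\<^sub>R (y, - ln b) \<in> {(x, y). V x \<le> ereal y}"
    using epi l by (intro convexD) auto
  then have "V ((1 - l) *\<^sub>R x + l *\<^sub>R y) \<le> ereal ((1 - l) * - ln a + l * - ln b)"
    by simp
  also have "(1 - l) * - ln a + l * - ln b = - ln (a powr (1 - l) * b powr l)"
    using ab by (simp add: ln_mult algebra_simps)
  finally show ?thesis
    using V_le_iff[of "a powr (1 - l) * b powr l"] ab by (simp only: powr_gt_zero mult_pos_pos)
qed

lemma log_concave_fun_convex_superlevel:
  fixes \<rho> :: "'a::real_vector \<Rightarrow> real"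
  assumes lc: "log_concave_fun \<rho>"
  shows "convex {x. c \<le> \<rho> x}"
proof (cases "0 < c")
  case True
  show ?thesis
    unfolding convex_alt
  proof (intro ballI allI impI, elim conjE)
    fix x y and u :: real assume "x \<in> {x. c \<le> \<rho> x}" "y \<in> {x. c \<le> \<rho> x}" "0 \<le> u" "u \<le> 1"
    then have "c powr (1 - u) * c powr u \<le> \<rho> ((1 - u) *\<^sub>R x + u *\<^sub>R y)"
      by (intro log_concave_fun_powr_le[OF lc True True]) auto
    then show "(1 - u) *\<^sub>R x + u *\<^sub>R y \<in> {x. c \<le> \<rho> x}"
      using True by (simp flip: powr_add)
  qed
next
  case False
  then have "{x. c \<le> \<rho> x} = UNIV"
    using log_concave_fun_nonneg[OF lc] by (auto intro: order_trans[of c 0])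
  then show ?thesis by simp
qed

lemma convex_imp_sets_lebesgue:
  fixes S :: "'a::euclidean_space set"
  assumes "convex S"
  shows "S \<in> sets lebesgue"
proof -
  have "S - interior S \<subseteq> frontier S"
    using closure_subset by (auto simp: frontier_def)
  then have "S - interior S \<in> null_sets lebesgue"
    using negligible_subset negligible_convex_frontier[OF assms] negligible_iff_null_sets by blast
  moreover have "S = interior S \<union> (S - interior S)"
    using interior_subset by blast
  ultimately show ?thesis
    by (metis borel_open open_interior sets.Un sets_completionI_sets null_setsD2 sets_lborel)
qed

lemma log_concave_fun_superlevel_sets_lebesgue:
  fixes \<rho> :: "'a::euclidean_space \<Rightarrow> real"
  shows "log_concave_fun \<rho> \<Longrightarrow> {x. c \<le> \<rho> x} \<in> sets lebesgue"
  by (rule convex_imp_sets_lebesgue[OF log_concave_fun_convex_superlevel])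

lemma log_concave_fun_borel_measurable:
  fixes \<rho> :: "'a::euclidean_space \<Rightarrow> real"
  shows "log_concave_fun \<rho> \<Longrightarrow> \<rho> \<in> borel_measurable lebesgue"
  by (rule borel_measurableI_ge) (simp add: log_concave_fun_superlevel_sets_lebesgue)

text \<open>The homothety with centre \<open>x\<^sub>0\<close> and ratio \<open>l\<close> maps the superlevel set at level \<open>b\<close> into the
  superlevel set at the weighted geometric mean of \<open>a\<close> and \<open>b\<close>.\<close>
lemma log_concave_fun_emeasure_superlevel_homothety:
  fixes \<rho> :: "'a::euclidean_space \<Rightarrow> real"
  assumes lc: "log_concave_fun \<rho>" and "0 < a" "0 < b" "a \<le> \<rho> x\<^sub>0" and l: "0 \<le> l" "l \<le> 1"
  shows "ennreal (l ^ DIM('a)) * emeasure lebesgue {x. b \<le> \<rho> x}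
           \<le> emeasure lebesgue {x. a powr (1 - l) * b powr l \<le> \<rho> x}"
proof -
  have "a powr (1 - l) * b powr l \<le> \<rho> (l *\<^sub>R z + (1 - l) *\<^sub>R x\<^sub>0)" if "b \<le> \<rho> z" for z
    using log_concave_fun_powr_le[OF lc assms(2-4) that l] by (simp add: add.commute)
  then have "(\<lambda>z. l *\<^sub>R z + (1 - l) *\<^sub>R x\<^sub>0) ` {x. b \<le> \<rho> x} \<subseteq> {x. a powr (1 - l) * b powr l \<le> \<rho> x}"
    by blast
  then have "emeasure lebesgue ((\<lambda>z. l *\<^sub>R z + (1 - l) *\<^sub>R x\<^sub>0) ` {x. b \<le> \<rho> x})
               \<le> emeasure lebesgue {x. a powr (1 - l) * b powr l \<le> \<rho> x}"
    by (rule emeasure_mono) (rule log_concave_fun_superlevel_sets_lebesgue[OF lc])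
  moreover have "emeasure lebesgue ((\<lambda>z. l *\<^sub>R z + (1 - l) *\<^sub>R x\<^sub>0) ` {x. b \<le> \<rho> x})
                   = ennreal (l ^ DIM('a)) * emeasure lebesgue {x. b \<le> \<rho> x}"
    using emeasure_lebesgue_affine[of l "(1 - l) *\<^sub>R x\<^sub>0" "{x. b \<le> \<rho> x}"]
    by (simp only: abs_of_nonneg[OF l(1)])
  ultimately show ?thesis
    by metis
qed

lemma nn_integral_nonzero_imp_superlevel_pos:
  fixes f :: "'a \<Rightarrow> real"
  assumes [measurable]: "f \<in> borel_measurable M" and "(\<integral>\<^sup>+x. ennreal (f x) \<partial>M) \<noteq> 0"
  shows "\<exists>c>0. 0 < emeasure M {x \<in> space M. c \<le> f x}"
proof (rule ccontr)
  assume "\<not> ?thesis"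
  then have "{x \<in> space M. 1 / real (Suc k) \<le> f x} \<in> null_sets M" for k
    by (auto simp: null_sets_def)
  then have "(\<Union>k. {x \<in> space M. 1 / real (Suc k) \<le> f x}) \<in> null_sets M"
    by (rule null_sets_UN)
  moreover have "{x \<in> space M. \<not> f x \<le> 0} \<subseteq> (\<Union>k. {x \<in> space M. 1 / real (Suc k) \<le> f x})"
  proof clarify
    fix x assume "x \<in> space M" "\<not> f x \<le> 0"
    then obtain k where "1 / real (Suc k) < f x"
      by (metis nat_approx_posE not_le)
    with \<open>x \<in> space M\<close> show "x \<in> (\<Union>k. {x \<in> space M. 1 / real (Suc k) \<le> f x})"
      by (auto intro: less_imp_le)
  qed
  ultimately have "AE x in M. f x \<le> 0"
    by (rule AE_I')
  then have "(\<integral>\<^sup>+x. ennreal (f x) \<partial>M) = 0"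
    by (simp add: nn_integral_0_iff_AE ennreal_eq_0_iff)
  with assms(2) show False ..
qed

lemma emeasure_superlevel_Markov:
  fixes f :: "'a \<Rightarrow> real"
  assumes "{x \<in> space M. s \<le> f x} \<in> sets M"
  shows "ennreal s * emeasure M {x \<in> space M. s \<le> f x} \<le> (\<integral>\<^sup>+x. ennreal (f x) \<partial>M)"
proof -
  have "ennreal s * emeasure M {x \<in> space M. s \<le> f x}
          = (\<integral>\<^sup>+x. ennreal s * indicator {x \<in> space M. s \<le> f x} x \<partial>M)"
    by (rule nn_integral_cmult_indicator[OF assms, symmetric])
  also have "\<dots> \<le> (\<integral>\<^sup>+x. ennreal (f x) \<partial>M)"
    by (intro nn_integral_mono) (auto simp: indicator_def ennreal_leI)
  finally show ?thesis .
qed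

text \<open>The homothety lemma with ratio \<open>1/2\<close> turns the superlevel set at level \<open>c\<close> and the point \<open>y\<close>
  into a set of measure at least \<open>2\<^sup>-\<^sup>n \<alpha>\<close> on which \<open>\<rho> \<ge> \<surd>(c \<rho> y)\<close>; Markov's inequality
  then bounds \<open>\<rho> y\<close>.\<close>
lemma log_concave_fun_le_of_superlevel_emeasure:
  fixes \<rho> :: "'a::euclidean_space \<Rightarrow> real"
  assumes lc: "log_concave_fun \<rho>" and c: "0 < c"
    and \<alpha>: "emeasure lebesgue {x. c \<le> \<rho> x} = ennreal \<alpha>" "0 < \<alpha>"
    and J: "(\<integral>\<^sup>+x. ennreal (\<rho> x) \<partial>lebesgue) = ennreal J" "0 \<le> J"
  shows "\<rho> y \<le> (2 ^ DIM('a) * J / \<alpha>)\<^sup>2 / c"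
proof (cases "0 < \<rho> y")
  case False
  with c show ?thesis
    by (smt (verit) divide_nonneg_nonneg zero_le_power2)
next
  case True
  define s where "s = sqrt (\<rho> y * c)"
  have s: "0 < s" "s\<^sup>2 = \<rho> y * c"
    using True c by (simp_all add: s_def)
  have "\<rho> y powr (1 - 1/2) * c powr (1/2) = s"
    using True c by (simp add: s_def powr_half_sqrt real_sqrt_mult)
  then have "ennreal ((1/2) ^ DIM('a)) * ennreal \<alpha> \<le> emeasure lebesgue {x. s \<le> \<rho> x}"
    using log_concave_fun_emeasure_superlevel_homothety[OF lc True c order_refl, of "1/2"] \<alpha>(1)
    by simp
  moreover have "ennreal s * emeasure lebesgue {x. s \<le> \<rho> x} \<le> ennreal J"
    using emeasure_superlevel_Markov[of lebesgue s \<rho>] log_concave_fun_superlevel_sets_lebesgue[OF lc] J(1)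
    by simp
  ultimately have "ennreal s * (ennreal ((1/2) ^ DIM('a)) * ennreal \<alpha>) \<le> ennreal J"
    using mult_left_mono order_trans zero_le by metis
  moreover have "ennreal s * (ennreal ((1/2) ^ DIM('a)) * ennreal \<alpha>) = ennreal (s * ((1/2) ^ DIM('a) * \<alpha>))"
    using s \<alpha> by (simp add: ennreal_mult)
  ultimately have "s * ((1/2) ^ DIM('a) * \<alpha>) \<le> J"
    using J(2) by (simp add: ennreal_le_iff)
  then have "s \<le> 2 ^ DIM('a) * J / \<alpha>"
    using \<alpha> by (simp add: field_simps power_divide)
  then have "\<rho> y * c \<le> (2 ^ DIM('a) * J / \<alpha>)\<^sup>2"
    using s by (metis power_mono less_imp_le)
  then show ?thesis
    using c by (simp add: pos_le_divide_eq)
qed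

lemma log_concave_fun_bdd_above:
  fixes \<rho> :: "'a::euclidean_space \<Rightarrow> real"
  assumes lc: "log_concave_fun \<rho>"
    and nonzero: "(\<integral>\<^sup>+x. ennreal (\<rho> x) \<partial>lebesgue) \<noteq> 0"
    and finite: "(\<integral>\<^sup>+x. ennreal (\<rho> x) \<partial>lebesgue) \<noteq> \<infinity>"
  shows "bdd_above (range \<rho>)"
proof -
  obtain J where J: "(\<integral>\<^sup>+x. ennreal (\<rho> x) \<partial>lebesgue) = ennreal J" "0 \<le> J"
    using finite by (cases "\<integral>\<^sup>+x. ennreal (\<rho> x) \<partial>lebesgue") auto
  obtain c where c: "0 < c" and pos: "0 < emeasure lebesgue {x. c \<le> \<rho> x}"
    using nn_integral_nonzero_imp_superlevel_pos[OF log_concave_fun_borel_measurable[OF lc] nonzero]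
    by auto
  have "ennreal c * emeasure lebesgue {x. c \<le> \<rho> x} \<le> ennreal J"
    using emeasure_superlevel_Markov[of lebesgue c \<rho>] log_concave_fun_superlevel_sets_lebesgue[OF lc] J(1)
    by simp
  then have "emeasure lebesgue {x. c \<le> \<rho> x} \<noteq> \<infinity>"
    using c by (auto simp: ennreal_mult_top top_unique)
  then obtain \<alpha> where "emeasure lebesgue {x. c \<le> \<rho> x} = ennreal \<alpha>" "0 < \<alpha>"
    using pos by (cases "emeasure lebesgue {x. c \<le> \<rho> x}") auto
  then have "\<rho> y \<le> (2 ^ DIM('a) * J / \<alpha>)\<^sup>2 / c" for y
    by (rule log_concave_fun_le_of_superlevel_emeasure[OF lc c _ _ J])
  then show ?thesis
    by (intro bdd_aboveI2)
qed

lemma nn_integral_exp_atLeast: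
  fixes \<tau> a :: real
  assumes "0 < \<tau>"
  shows "(\<integral>\<^sup>+u\<in>{a..}. ennreal (\<tau> * exp (- \<tau> * u)) \<partial>lborel) = ennreal (exp (- \<tau> * a))"
proof -
  have "((\<lambda>u. - exp (- \<tau> * u)) \<longlongrightarrow> 0) at_top"
    using assms by real_asymp
  then have "(\<integral>\<^sup>+u\<in>{a..}. ennreal (\<tau> * exp (- \<tau> * u)) \<partial>lborel) = 0 - (- exp (- \<tau> * a))"
    using assms by (intro nn_integral_FTC_atLeast) (auto intro!: derivative_eq_intros)
  then show ?thesis
    by simp
qed

lemma mult_exp_le_iff:
  fixes M r \<tau> t :: real
  assumes M: "0 < M" and r: "0 < r" and \<tau>: "0 < \<tau>"
  shows "M * exp (- \<tau> * t) \<le> r \<longleftrightarrow> ln (M / r) / \<tau> \<le> t"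
proof -
  have "M * exp (- \<tau> * t) \<le> r \<longleftrightarrow> ln M - \<tau> * t \<le> ln r"
    using M r by (subst ln_le_cancel_iff[symmetric]) (auto simp: ln_mult)
  also have "\<dots> \<longleftrightarrow> ln (M / r) / \<tau> \<le> t"
    using M r \<tau> by (simp add: ln_div pos_divide_le_eq algebra_simps)
  finally show ?thesis .
qed

text \<open>Substituting \<open>s = M e\<^sup>-\<^sup>\<tau>\<^sup>t\<close>, the integral measures the part of \<open>[0, M e\<^sup>-\<^sup>\<tau>]\<close> below \<open>r\<close>.\<close>
lemma nn_integral_exp_level_indicator:
  fixes M \<tau> r :: real
  assumes M: "0 < M" and \<tau>: "0 < \<tau>" and r: "0 \<le> r"
  shows "(\<integral>\<^sup>+t\<in>{1..}. ennreal (M * \<tau> * exp (- \<tau> * t)) * indicator {M * exp (- \<tau> * t)..} r \<partial>lborel)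
           = ennreal (min r (M * exp (- \<tau>)))"
proof (cases "r = 0")
  case True
  with M show ?thesis
    by (simp add: indicator_def mult_le_0_iff)
next
  case False
  with r have r: "0 < r" by simp
  define t\<^sub>0 where "t\<^sub>0 = max 1 (ln (M / r) / \<tau>)"
  note level_iff = mult_exp_le_iff[OF M r \<tau>]
  have "(\<integral>\<^sup>+t\<in>{1..}. ennreal (M * \<tau> * exp (- \<tau> * t)) * indicator {M * exp (- \<tau> * t)..} r \<partial>lborel)
          = (\<integral>\<^sup>+t. ennreal M * (ennreal (\<tau> * exp (- \<tau> * t)) * indicator {t\<^sub>0..} t) \<partial>lborel)"
  proof (intro nn_integral_cong)
    fix t
    show "ennreal (M * \<tau> * exp (- \<tau> * t)) * indicator {M * exp (- \<tau> * t)..} r * indicator {1..} t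
            = ennreal M * (ennreal (\<tau> * exp (- \<tau> * t)) * indicator {t\<^sub>0..} t)"
      using M \<tau> level_iff[of t] by (auto simp: indicator_def t\<^sub>0_def ennreal_mult mult.assoc)
  qed
  also have "\<dots> = ennreal M * ennreal (exp (- \<tau> * t\<^sub>0))"
    using nn_integral_exp_atLeast[OF \<tau>] by (simp add: nn_integral_cmult)
  also have "\<dots> = ennreal (M * exp (- \<tau> * t\<^sub>0))"
    using M by (simp add: ennreal_mult)
  also have "M * exp (- \<tau> * t\<^sub>0) = min r (M * exp (- \<tau>))"
  proof (cases "1 \<le> ln (M / r) / \<tau>")
    case True
    have "M * exp (- \<tau> * (ln (M / r) / \<tau>)) = r"
      using M r \<tau> by (simp add: exp_minus field_simps)
    with True level_iff[of 1] show ?thesis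
      by (auto simp: t\<^sub>0_def min_def)
  next
    case False
    with level_iff[of 1] show ?thesis
      by (auto simp: t\<^sub>0_def min_def)
  qed
  finally show ?thesis .
qed

lemma ennreal_le_exp_layer_decomposition:
  fixes r M \<tau> :: real
  assumes r: "0 \<le> r" "r \<le> M" and M: "0 < M" and \<tau>: "0 < \<tau>"
  shows "ennreal r \<le> ennreal (M * (1 - exp (- \<tau>))) * indicator {exp (- \<tau>) * M..} r
           + (\<integral>\<^sup>+t\<in>{1..}. ennreal (M * \<tau> * exp (- \<tau> * t)) * indicator {M * exp (- \<tau> * t)..} r \<partial>lborel)"
proof -
  have level: "(\<integral>\<^sup>+t\<in>{1..}. ennreal (M * \<tau> * exp (- \<tau> * t)) * indicator {M * exp (- \<tau> * t)..} r \<partial>lborel)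
                 = ennreal (min r (M * exp (- \<tau>)))"
    by (rule nn_integral_exp_level_indicator[OF M \<tau> r(1)])
  show ?thesis
  proof (cases "exp (- \<tau>) * M \<le> r")
    case True
    then have "ennreal (M * (1 - exp (- \<tau>))) * indicator {exp (- \<tau>) * M..} r + ennreal (min r (M * exp (- \<tau>)))
                 = ennreal M"
      using M \<tau> by (simp add: min_def mult.commute algebra_simps flip: ennreal_plus)
    with r(2) show ?thesis
      unfolding level by (simp add: ennreal_leI)
  next
    case False
    then show ?thesis
      unfolding level by (simp add: min_def mult.commute)
  qed
qed

lemma nn_integral_power_Icc:
  fixes u :: real
  assumes "1 \<le> u"
  shows "(\<integral>\<^sup>+t\<in>{1..u}. ennreal (real (Suc m) * t ^ m) \<partial>lborel) = ennreal (u ^ Suc m - 1)"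
proof -
  have "DERIV (\<lambda>t. t ^ Suc m) t :> real (Suc m) * t ^ m" for t
    using DERIV_pow[of "Suc m" t] by simp
  then show ?thesis
    using assms by (subst nn_integral_FTC_Icc[where F = "\<lambda>t. t ^ Suc m"]) auto
qed

lemma nn_integral_lborel_swap_triangle:
  fixes f g :: "real \<Rightarrow> ennreal"
  assumes [measurable]: "f \<in> borel_measurable borel" "g \<in> borel_measurable borel"
  shows "(\<integral>\<^sup>+u. f u * (\<integral>\<^sup>+t\<in>{a..u}. g t \<partial>lborel) \<partial>lborel)
           = (\<integral>\<^sup>+t\<in>{a..}. g t * (\<integral>\<^sup>+u\<in>{t..}. f u \<partial>lborel) \<partial>lborel)"
proof -
  have "Measurable.pred (lborel \<Otimes>\<^sub>M lborel) (\<lambda>p::real \<times> real. snd p \<le> fst p)"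
    by measurable
  then have [measurable]: "{p::real \<times> real. snd p \<le> fst p} \<in> sets (lborel \<Otimes>\<^sub>M lborel)"
    by (simp add: pred_def space_pair_measure)
  define h where "h u t = f u * g t * indicator {a..} t * indicator {p. snd p \<le> fst p} (u, t)" for u t
  have "case_prod h \<in> borel_measurable (lborel \<Otimes>\<^sub>M lborel)"
    unfolding h_def split_beta' by measurable
  then have "(\<integral>\<^sup>+u. (\<integral>\<^sup>+t. h u t \<partial>lborel) \<partial>lborel) = (\<integral>\<^sup>+t. (\<integral>\<^sup>+u. h u t \<partial>lborel) \<partial>lborel)"
    by (rule lborel_pair.Fubini'[symmetric])
  moreover have "(\<integral>\<^sup>+t. h u t \<partial>lborel) = f u * (\<integral>\<^sup>+t\<in>{a..u}. g t \<partial>lborel)" for u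
  proof -
    have "(\<integral>\<^sup>+t. h u t \<partial>lborel) = (\<integral>\<^sup>+t. f u * (g t * indicator {a..u} t) \<partial>lborel)"
      by (intro nn_integral_cong) (simp add: h_def indicator_def)
    then show ?thesis
      by (simp add: nn_integral_cmult)
  qed
  moreover have "(\<integral>\<^sup>+u. h u t \<partial>lborel) = g t * (\<integral>\<^sup>+u\<in>{t..}. f u \<partial>lborel) * indicator {a..} t" for t
  proof -
    have "(\<integral>\<^sup>+u. h u t \<partial>lborel) = (\<integral>\<^sup>+u. (g t * indicator {a..} t) * (f u * indicator {t..} u) \<partial>lborel)"
      by (intro nn_integral_cong) (simp add: h_def indicator_def mult_ac)
    also have "\<dots> = (g t * indicator {a..} t) * (\<integral>\<^sup>+u\<in>{t..}. f u \<partial>lborel)"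
      by (rule nn_integral_cmult) simp
    finally show ?thesis
      by (simp add: mult_ac)
  qed
  ultimately show ?thesis
    by simp
qed

text \<open>Integration by parts, via \<open>u\<^sup>m\<^sup>+\<^sup>1 - 1 = \<integral>\<^sub>1\<^sup>u (m+1) t\<^sup>m dt\<close> and Fubini.\<close>
lemma nn_integral_exp_moment_atLeast_1:
  fixes \<tau> :: real
  assumes \<tau>: "0 < \<tau>"
  shows "(\<integral>\<^sup>+u\<in>{1..}. ennreal (\<tau> * exp (- \<tau> * u) * u ^ Suc m) \<partial>lborel)
           = ennreal (exp (- \<tau>)) + of_nat (Suc m) * (\<integral>\<^sup>+t\<in>{1..}. ennreal (t ^ m * exp (- \<tau> * t)) \<partial>lborel)"
proof -
  let ?f = "\<lambda>u. ennreal (\<tau> * exp (- \<tau> * u))" and ?g = "\<lambda>t. ennreal (real (Suc m) * t ^ m)"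
  have power_eq: "ennreal (u ^ Suc m - 1) * indicator {1..} u = (\<integral>\<^sup>+t\<in>{1..u}. ?g t \<partial>lborel)" for u
    by (cases "1 \<le> u") (simp_all add: nn_integral_power_Icc del: of_nat_Suc)
  have split: "ennreal (\<tau> * exp (- \<tau> * u) * u ^ Suc m) * indicator {1..} u
      = ?f u * indicator {1..} u + ?f u * (ennreal (u ^ Suc m - 1) * indicator {1..} u)" for u
  proof (cases "1 \<le> u")
    case True
    define w where "w = \<tau> * exp (- \<tau> * u)"
    have w: "0 \<le> w"
      using \<tau> by (simp add: w_def)
    have "1 \<le> u ^ Suc m"
      using True by (rule one_le_power)
    have "ennreal (w * u ^ Suc m) = ennreal (w + w * (u ^ Suc m - 1))"
      by (simp add: algebra_simps)
    also have "\<dots> = ennreal w + ennreal w * ennreal (u ^ Suc m - 1)"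
      using w \<open>1 \<le> u ^ Suc m\<close> by (simp add: ennreal_plus ennreal_mult)
    finally show ?thesis
      using True by (simp add: w_def)
  qed simp
  have "(\<integral>\<^sup>+u\<in>{1..}. ennreal (\<tau> * exp (- \<tau> * u) * u ^ Suc m) \<partial>lborel)
          = (\<integral>\<^sup>+u\<in>{1..}. ?f u \<partial>lborel) + (\<integral>\<^sup>+u. ?f u * (ennreal (u ^ Suc m - 1) * indicator {1..} u) \<partial>lborel)"
    unfolding split by (rule nn_integral_add) auto
  also have "(\<integral>\<^sup>+u. ?f u * (ennreal (u ^ Suc m - 1) * indicator {1..} u) \<partial>lborel)
               = (\<integral>\<^sup>+u. ?f u * (\<integral>\<^sup>+t\<in>{1..u}. ?g t \<partial>lborel) \<partial>lborel)"
    by (simp only: power_eq)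
  also have "(\<integral>\<^sup>+u. ?f u * (\<integral>\<^sup>+t\<in>{1..u}. ?g t \<partial>lborel) \<partial>lborel)
               = (\<integral>\<^sup>+t\<in>{1..}. ?g t * (\<integral>\<^sup>+u\<in>{t..}. ?f u \<partial>lborel) \<partial>lborel)"
    by (rule nn_integral_lborel_swap_triangle) auto
  also have "\<dots> = (\<integral>\<^sup>+t. of_nat (Suc m) * (ennreal (t ^ m * exp (- \<tau> * t)) * indicator {1..} t) \<partial>lborel)"
    using nn_integral_exp_atLeast[OF \<tau>] by (intro nn_integral_cong)
      (auto simp: indicator_def ennreal_mult ennreal_of_nat_eq_real_of_nat mult_ac
            simp del: of_nat_Suc)
  finally show ?thesis
    using nn_integral_exp_atLeast[OF \<tau>] by (simp add: nn_integral_cmult)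
qed

lemma nn_integral_power_exp_atLeast_1:
  fixes \<tau> :: real
  assumes \<tau>: "0 < \<tau>"
  shows "(\<integral>\<^sup>+t\<in>{1..}. ennreal (t ^ m * exp (- \<tau> * t)) \<partial>lborel)
           = ennreal (integral {1..} (\<lambda>t. t ^ m * exp (- \<tau> * t)))"
proof (rule set_nn_integral_lborel_eq_integral)
  show "set_borel_measurable borel {1..} (\<lambda>t::real. t ^ m * exp (- \<tau> * t))"
    unfolding set_borel_measurable_def by measurable
  text \<open>Domination by the \<open>m\<close>-th moment of the exponential distribution.\<close>
  have "(\<integral>\<^sup>+t\<in>{1..}. ennreal (t ^ m * exp (- \<tau> * t)) \<partial>lborel)
          \<le> (\<integral>\<^sup>+t. ennreal (1 / \<tau>) * ennreal (erlang_density 0 \<tau> t * t ^ m) \<partial>lborel)"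
    using \<tau> by (intro nn_integral_mono)
      (auto simp: indicator_def erlang_density_def ennreal_mult[symmetric] field_simps)
  also have "\<dots> = ennreal (1 / \<tau>) * (fact m / (fact 0 * \<tau> ^ m))"
    using \<tau> by (simp add: nn_integral_cmult nn_integral_erlang_ith_moment)
  also have "\<dots> < \<infinity>"
    using \<tau> by (simp add: ennreal_mult_less_top)
  finally show "(\<integral>\<^sup>+t\<in>{1..}. ennreal (t ^ m * exp (- \<tau> * t)) \<partial>lborel) < \<infinity>" .
qed auto

lemma integral_power_exp_atLeast_1_nonneg:
  fixes \<tau> :: real
  shows "0 \<le> integral {1..} (\<lambda>t. t ^ m * exp (- \<tau> * t))"
  by (cases "(\<lambda>t. t ^ m * exp (- \<tau> * t)) integrable_on {1..}")
     (auto intro: integral_nonneg simp: not_integrable_integral)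

lemma nn_integral_exp_moment_atLeast_1_eq_integral:
  fixes \<tau> :: real
  assumes \<tau>: "0 < \<tau>" and n: "0 < n"
  shows "(\<integral>\<^sup>+u\<in>{1..}. ennreal (\<tau> * exp (- \<tau> * u) * u ^ n) \<partial>lborel)
           = ennreal (exp (- \<tau>) + real n * integral {1..} (\<lambda>t. t ^ (n - 1) * exp (- \<tau> * t)))"
proof -
  obtain m where m: "n = Suc m"
    using n gr0_implies_Suc by blast
  define I where "I = integral {1..} (\<lambda>t. t ^ m * exp (- \<tau> * t))"
  have "0 \<le> I"
    unfolding I_def by (rule integral_power_exp_atLeast_1_nonneg)
  moreover have "(\<integral>\<^sup>+u\<in>{1..}. ennreal (\<tau> * exp (- \<tau> * u) * u ^ Suc m) \<partial>lborel)
                   = ennreal (exp (- \<tau>)) + of_nat (Suc m) * ennreal I"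
    using nn_integral_exp_moment_atLeast_1[OF \<tau>, of m] nn_integral_power_exp_atLeast_1[OF \<tau>, of m]
    by (simp add: I_def)
  ultimately show ?thesis
    by (simp add: m I_def ennreal_of_nat_eq_real_of_nat ennreal_mult del: of_nat_Suc)
qed

lemma sigma_finite_lebesgue: "sigma_finite_measure (lebesgue :: 'a::euclidean_space measure)"
proof
  show "\<exists>A::'a set set. countable A \<and> A \<subseteq> sets lebesgue \<and> \<Union>A = space lebesgue
          \<and> (\<forall>a\<in>A. emeasure lebesgue a \<noteq> \<infinity>)"
  proof (intro exI conjI)
    show "\<Union>(range (\<lambda>n::nat. cball (0::'a) (real n))) = space lebesgue"
      by (auto simp: real_arch_simple)
    show "\<forall>a\<in>range (\<lambda>n::nat. cball (0::'a) (real n)). emeasure lebesgue a \<noteq> \<infinity>"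
      using fmeasurableD2[OF lmeasurable_cball] by auto
  qed auto
qed

lemma nn_integral_superlevel_Tonelli:
  fixes \<rho> :: "'a::euclidean_space \<Rightarrow> real" and w s :: "real \<Rightarrow> real"
  assumes [measurable]: "\<rho> \<in> borel_measurable lebesgue" "w \<in> borel_measurable borel"
    "s \<in> borel_measurable borel" "A \<in> sets borel"
  shows "(\<lambda>x. \<integral>\<^sup>+t\<in>A. ennreal (w t) * indicator {s t..} (\<rho> x) \<partial>lborel) \<in> borel_measurable lebesgue"
    and "(\<integral>\<^sup>+x. (\<integral>\<^sup>+t\<in>A. ennreal (w t) * indicator {s t..} (\<rho> x) \<partial>lborel) \<partial>lebesgue)
           = (\<integral>\<^sup>+t\<in>A. ennreal (w t) * emeasure lebesgue {x. s t \<le> \<rho> x} \<partial>lborel)"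
proof -
  interpret pair_sigma_finite "lebesgue :: 'a measure" "lborel :: real measure"
    unfolding pair_sigma_finite_def using sigma_finite_lebesgue sigma_finite_lborel by blast
  define g where "g x t = ennreal (w t) * indicator {s t..} (\<rho> x) * indicator A t" for x t
  have "Measurable.pred (lebesgue \<Otimes>\<^sub>M lborel) (\<lambda>p::'a \<times> real. s (snd p) \<le> \<rho> (fst p))"
    by measurable
  then have [measurable]: "{p::'a \<times> real. s (snd p) \<le> \<rho> (fst p)} \<in> sets (lebesgue \<Otimes>\<^sub>M lborel)"
    by (simp add: pred_def space_pair_measure)
  have "case_prod g = (\<lambda>p. ennreal (w (snd p)) * indicator {p. s (snd p) \<le> \<rho> (fst p)} p * indicator A (snd p))"
    by (auto simp: g_def fun_eq_iff indicator_def)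
  also have "\<dots> \<in> borel_measurable (lebesgue \<Otimes>\<^sub>M lborel)"
    by measurable
  finally have g_measurable: "case_prod g \<in> borel_measurable (lebesgue \<Otimes>\<^sub>M lborel)" .
  then show "(\<lambda>x. \<integral>\<^sup>+t\<in>A. ennreal (w t) * indicator {s t..} (\<rho> x) \<partial>lborel) \<in> borel_measurable lebesgue"
    using lborel.borel_measurable_nn_integral[OF g_measurable] by (simp add: g_def)
  have inner: "(\<integral>\<^sup>+x. g x t \<partial>lebesgue) = ennreal (w t) * emeasure lebesgue {x. s t \<le> \<rho> x} * indicator A t" for t
  proof -
    have "Measurable.pred lebesgue (\<lambda>x. s t \<le> \<rho> x)"
      by measurable
    then have sets: "{x. s t \<le> \<rho> x} \<in> sets lebesgue"
      by (simp add: pred_def)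
    have "(\<integral>\<^sup>+x. g x t \<partial>lebesgue) = (\<integral>\<^sup>+x. (ennreal (w t) * indicator A t) * indicator {x. s t \<le> \<rho> x} x \<partial>lebesgue)"
      by (intro nn_integral_cong) (simp add: g_def indicator_def)
    also have "\<dots> = (ennreal (w t) * indicator A t) * emeasure lebesgue {x. s t \<le> \<rho> x}"
      by (rule nn_integral_cmult_indicator[OF sets])
    finally show ?thesis
      by (simp add: mult_ac)
  qed
  have "(\<integral>\<^sup>+x. (\<integral>\<^sup>+t. g x t \<partial>lborel) \<partial>lebesgue) = (\<integral>\<^sup>+t. (\<integral>\<^sup>+x. g x t \<partial>lebesgue) \<partial>lborel)"
    by (rule Fubini'[OF g_measurable, symmetric])
  also have "\<dots> = (\<integral>\<^sup>+t\<in>A. ennreal (w t) * emeasure lebesgue {x. s t \<le> \<rho> x} \<partial>lborel)"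
    by (simp only: inner)
  finally show "(\<integral>\<^sup>+x. (\<integral>\<^sup>+t\<in>A. ennreal (w t) * indicator {s t..} (\<rho> x) \<partial>lborel) \<partial>lebesgue)
                  = (\<integral>\<^sup>+t\<in>A. ennreal (w t) * emeasure lebesgue {x. s t \<le> \<rho> x} \<partial>lborel)"
    by (simp only: g_def)
qed

text \<open>Layer-cake decomposition: levels above \<open>e\<^sup>-\<^sup>\<tau> M\<close> contribute at most \<open>M (1 - e\<^sup>-\<^sup>\<tau>) |K|\<close>,
  the lower levels are parametrised as \<open>M e\<^sup>-\<^sup>\<tau>\<^sup>t\<close> with \<open>t \<ge> 1\<close>.\<close>
lemma nn_integral_le_superlevel_layers:
  fixes \<rho> :: "'a::euclidean_space \<Rightarrow> real"
  assumes [measurable]: "\<rho> \<in> borel_measurable lebesgue"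
    and nonneg: "\<And>x. 0 \<le> \<rho> x" and le_M: "\<And>x. \<rho> x \<le> M" and M: "0 < M" and \<tau>: "0 < \<tau>"
  shows "(\<integral>\<^sup>+x. ennreal (\<rho> x) \<partial>lebesgue)
           \<le> ennreal (M * (1 - exp (- \<tau>))) * emeasure lebesgue {x. exp (- \<tau>) * M \<le> \<rho> x}
             + (\<integral>\<^sup>+t\<in>{1..}. ennreal (M * \<tau> * exp (- \<tau> * t))
                  * emeasure lebesgue {x. M * exp (- \<tau> * t) \<le> \<rho> x} \<partial>lborel)"
proof -
  define K where "K = {x. exp (- \<tau>) * M \<le> \<rho> x}"
  have "Measurable.pred lebesgue (\<lambda>x. exp (- \<tau>) * M \<le> \<rho> x)"
    by measurable
  then have K_sets [measurable]: "K \<in> sets lebesgue"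
    by (simp add: pred_def K_def)
  have "(\<integral>\<^sup>+x. ennreal (\<rho> x) \<partial>lebesgue)
          \<le> (\<integral>\<^sup>+x. ennreal (M * (1 - exp (- \<tau>))) * indicator K x
                + (\<integral>\<^sup>+t\<in>{1..}. ennreal (M * \<tau> * exp (- \<tau> * t)) * indicator {M * exp (- \<tau> * t)..} (\<rho> x) \<partial>lborel)
              \<partial>lebesgue)"
  proof (intro nn_integral_mono)
    fix x
    have "indicator K x = (indicator {exp (- \<tau>) * M..} (\<rho> x) :: ennreal)"
      by (simp add: K_def indicator_def)
    then show "ennreal (\<rho> x) \<le> ennreal (M * (1 - exp (- \<tau>))) * indicator K x
                + (\<integral>\<^sup>+t\<in>{1..}. ennreal (M * \<tau> * exp (- \<tau> * t)) * indicator {M * exp (- \<tau> * t)..} (\<rho> x) \<partial>lborel)"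
      by (simp only: ennreal_le_exp_layer_decomposition[OF nonneg le_M M \<tau>])
  qed
  also have "\<dots> = ennreal (M * (1 - exp (- \<tau>))) * emeasure lebesgue K
      + (\<integral>\<^sup>+x. (\<integral>\<^sup>+t\<in>{1..}. ennreal (M * \<tau> * exp (- \<tau> * t)) * indicator {M * exp (- \<tau> * t)..} (\<rho> x) \<partial>lborel) \<partial>lebesgue)"
    using nn_integral_superlevel_Tonelli(1)[of \<rho> "\<lambda>t. M * \<tau> * exp (- \<tau> * t)" "\<lambda>t. M * exp (- \<tau> * t)" "{1..}"]
    by (subst nn_integral_add) (auto simp: nn_integral_cmult_indicator)
  also have "(\<integral>\<^sup>+x. (\<integral>\<^sup>+t\<in>{1..}. ennreal (M * \<tau> * exp (- \<tau> * t)) * indicator {M * exp (- \<tau> * t)..} (\<rho> x) \<partial>lborel) \<partial>lebesgue)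
      = (\<integral>\<^sup>+t\<in>{1..}. ennreal (M * \<tau> * exp (- \<tau> * t)) * emeasure lebesgue {x. M * exp (- \<tau> * t) \<le> \<rho> x} \<partial>lborel)"
    by (rule nn_integral_superlevel_Tonelli(2)) auto
  finally show ?thesis
    by (simp only: K_def)
qed

lemma exp_le_powr_interpolation:
  fixes M \<delta> \<tau> t l :: real
  assumes M: "0 < M" and \<delta>: "0 \<le> \<delta>" and l: "0 \<le> l" "l * (\<tau> * t) = \<tau> - \<delta>"
  shows "exp (- \<tau>) * M \<le> (M * exp (- \<delta>)) powr (1 - l) * (M * exp (- \<tau> * t)) powr l"
proof -
  have "exp (- \<tau>) * M = exp (ln M - \<tau>)"
    using M by (simp add: exp_diff exp_minus field_simps)
  also have "\<dots> \<le> exp (ln M - \<tau> + l * \<delta>)"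
    using l \<delta> by simp
  also have "\<dots> = exp ((1 - l) * ln (M * exp (- \<delta>)) + l * ln (M * exp (- \<tau> * t)))"
    using M l by (simp add: ln_mult algebra_simps)
  also have "\<dots> = (M * exp (- \<delta>)) powr (1 - l) * (M * exp (- \<tau> * t)) powr l"
    using M by (simp add: powr_def exp_add)
  finally show ?thesis .
qed

text \<open>A point \<open>x\<^sub>0\<close> with \<open>\<rho> x\<^sub>0 \<ge> M e\<^sup>-\<^sup>\<delta>\<close> stands in for a maximiser, which need not exist;
  this costs the factor \<open>(\<tau>/(\<tau> - \<delta>))\<^sup>n\<close>.\<close>
lemma log_concave_fun_emeasure_superlevel_exp_le:
  fixes \<rho> :: "'a::euclidean_space \<Rightarrow> real"
  assumes lc: "log_concave_fun \<rho>" and M: "0 < M" and \<delta>: "0 < \<delta>" "\<delta> < \<tau>"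
    and x\<^sub>0: "M * exp (- \<delta>) \<le> \<rho> x\<^sub>0" and t: "1 \<le> t"
  shows "emeasure lebesgue {x. M * exp (- \<tau> * t) \<le> \<rho> x}
           \<le> ennreal ((t * \<tau> / (\<tau> - \<delta>)) ^ DIM('a)) * emeasure lebesgue {x. exp (- \<tau>) * M \<le> \<rho> x}"
proof -
  define l where "l = (\<tau> - \<delta>) / (t * \<tau>)"
  have "\<tau> \<le> t * \<tau>"
    using \<delta> t by (simp add: mult_le_cancel_right1)
  then have "\<tau> - \<delta> \<le> t * \<tau>"
    using \<delta> by linarith
  then have l: "0 < l" "l \<le> 1"
    using \<delta> t by (auto simp: l_def)
  have "l * (\<tau> * t) = \<tau> - \<delta>"
    using \<delta> t by (simp add: l_def)
  with M \<delta> l have mean: "exp (- \<tau>) * M \<le> (M * exp (- \<delta>)) powr (1 - l) * (M * exp (- \<tau> * t)) powr l"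
    by (intro exp_le_powr_interpolation) auto
  then have "{x. (M * exp (- \<delta>)) powr (1 - l) * (M * exp (- \<tau> * t)) powr l \<le> \<rho> x}
               \<subseteq> {x. exp (- \<tau>) * M \<le> \<rho> x}"
    by (auto intro: order_trans[OF mean])
  then have "emeasure lebesgue {x. (M * exp (- \<delta>)) powr (1 - l) * (M * exp (- \<tau> * t)) powr l \<le> \<rho> x}
               \<le> emeasure lebesgue {x. exp (- \<tau>) * M \<le> \<rho> x}"
    by (rule emeasure_mono) (rule log_concave_fun_superlevel_sets_lebesgue[OF lc])
  moreover have "ennreal (l ^ DIM('a)) * emeasure lebesgue {x. M * exp (- \<tau> * t) \<le> \<rho> x}
      \<le> emeasure lebesgue {x. (M * exp (- \<delta>)) powr (1 - l) * (M * exp (- \<tau> * t)) powr l \<le> \<rho> x}"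
    using M l by (intro log_concave_fun_emeasure_superlevel_homothety[OF lc _ _ x\<^sub>0]) auto
  ultimately have scaled: "ennreal (l ^ DIM('a)) * emeasure lebesgue {x. M * exp (- \<tau> * t) \<le> \<rho> x}
                             \<le> emeasure lebesgue {x. exp (- \<tau>) * M \<le> \<rho> x}"
    by (rule order_trans[rotated])
  have "ennreal ((1 / l) ^ DIM('a)) * ennreal (l ^ DIM('a)) = 1"
    using l by (simp add: power_one_over flip: ennreal_mult)
  then have "emeasure lebesgue {x. M * exp (- \<tau> * t) \<le> \<rho> x}
               = ennreal ((1 / l) ^ DIM('a)) * (ennreal (l ^ DIM('a)) * emeasure lebesgue {x. M * exp (- \<tau> * t) \<le> \<rho> x})"
    by (metis mult.assoc mult_1)
  also have "\<dots> \<le> ennreal ((1 / l) ^ DIM('a)) * emeasure lebesgue {x. exp (- \<tau>) * M \<le> \<rho> x}"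
    using scaled by (rule mult_left_mono) simp
  also have "1 / l = t * \<tau> / (\<tau> - \<delta>)"
    by (simp add: l_def)
  finally show ?thesis .
qed

lemma log_concave_fun_exp_weighted_superlevel_le:
  fixes \<rho> :: "'a::euclidean_space \<Rightarrow> real"
  assumes lc: "log_concave_fun \<rho>" and M: "0 < M" and \<delta>: "0 < \<delta>" "\<delta> < \<tau>"
    and x\<^sub>0: "M * exp (- \<delta>) \<le> \<rho> x\<^sub>0" and t: "1 \<le> t"
  shows "ennreal (M * \<tau> * exp (- \<tau> * t)) * emeasure lebesgue {x. M * exp (- \<tau> * t) \<le> \<rho> x}
           \<le> ennreal M * emeasure lebesgue {x. exp (- \<tau>) * M \<le> \<rho> x} * ennreal ((\<tau> / (\<tau> - \<delta>)) ^ DIM('a))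
             * ennreal (\<tau> * exp (- \<tau> * t) * t ^ DIM('a))"
proof -
  define q where "q = (\<tau> / (\<tau> - \<delta>)) ^ DIM('a)"
  have "ennreal (M * \<tau> * exp (- \<tau> * t)) * ennreal ((t * \<tau> / (\<tau> - \<delta>)) ^ DIM('a))
          = ennreal (M * \<tau> * exp (- \<tau> * t) * (t * \<tau> / (\<tau> - \<delta>)) ^ DIM('a))"
    using M \<delta> t by (intro ennreal_mult[symmetric]) auto
  also have "M * \<tau> * exp (- \<tau> * t) * (t * \<tau> / (\<tau> - \<delta>)) ^ DIM('a)
               = M * (q * (\<tau> * exp (- \<tau> * t) * t ^ DIM('a)))"
    by (simp add: q_def power_mult_distrib power_divide)
  also have "ennreal \<dots> = ennreal M * (ennreal q * ennreal (\<tau> * exp (- \<tau> * t) * t ^ DIM('a)))"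
    using M \<delta> t by (simp add: q_def ennreal_mult)
  finally have product: "ennreal (M * \<tau> * exp (- \<tau> * t)) * ennreal ((t * \<tau> / (\<tau> - \<delta>)) ^ DIM('a))
                           = ennreal M * (ennreal q * ennreal (\<tau> * exp (- \<tau> * t) * t ^ DIM('a)))" .
  have "ennreal (M * \<tau> * exp (- \<tau> * t)) * emeasure lebesgue {x. M * exp (- \<tau> * t) \<le> \<rho> x}
          \<le> ennreal (M * \<tau> * exp (- \<tau> * t))
              * (ennreal ((t * \<tau> / (\<tau> - \<delta>)) ^ DIM('a)) * emeasure lebesgue {x. exp (- \<tau>) * M \<le> \<rho> x})"
    by (intro mult_left_mono log_concave_fun_emeasure_superlevel_exp_le[OF lc M \<delta> x\<^sub>0 t]) simp
  also have "\<dots> = ennreal M * emeasure lebesgue {x. exp (- \<tau>) * M \<le> \<rho> x} * ennreal q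
                    * ennreal (\<tau> * exp (- \<tau> * t) * t ^ DIM('a))"
    unfolding mult.assoc[symmetric] product by (simp only: ac_simps)
  finally show ?thesis
    by (simp only: q_def)
qed

lemma log_concave_fun_superlevel_tail_le:
  fixes \<rho> :: "'a::euclidean_space \<Rightarrow> real"
  assumes lc: "log_concave_fun \<rho>" and M: "0 < M" and \<delta>: "0 < \<delta>" "\<delta> < \<tau>"
    and x\<^sub>0: "M * exp (- \<delta>) \<le> \<rho> x\<^sub>0"
  shows "(\<integral>\<^sup>+t\<in>{1..}. ennreal (M * \<tau> * exp (- \<tau> * t)) * emeasure lebesgue {x. M * exp (- \<tau> * t) \<le> \<rho> x} \<partial>lborel)
           \<le> ennreal M * emeasure lebesgue {x. exp (- \<tau>) * M \<le> \<rho> x} * ennreal ((\<tau> / (\<tau> - \<delta>)) ^ DIM('a))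
             * (\<integral>\<^sup>+t\<in>{1..}. ennreal (\<tau> * exp (- \<tau> * t) * t ^ DIM('a)) \<partial>lborel)"
proof -
  define C where "C = ennreal M * emeasure lebesgue {x. exp (- \<tau>) * M \<le> \<rho> x} * ennreal ((\<tau> / (\<tau> - \<delta>)) ^ DIM('a))"
  have "(\<integral>\<^sup>+t\<in>{1..}. ennreal (M * \<tau> * exp (- \<tau> * t)) * emeasure lebesgue {x. M * exp (- \<tau> * t) \<le> \<rho> x} \<partial>lborel)
          \<le> (\<integral>\<^sup>+t. C * (ennreal (\<tau> * exp (- \<tau> * t) * t ^ DIM('a)) * indicator {1..} t) \<partial>lborel)"
  proof (intro nn_integral_mono)
    fix t :: real
    show "ennreal (M * \<tau> * exp (- \<tau> * t)) * emeasure lebesgue {x. M * exp (- \<tau> * t) \<le> \<rho> x}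
            * indicator {1..} t
          \<le> C * (ennreal (\<tau> * exp (- \<tau> * t) * t ^ DIM('a)) * indicator {1..} t)"
      using log_concave_fun_exp_weighted_superlevel_le[OF lc M \<delta> x\<^sub>0, of t]
      unfolding C_def by (cases "1 \<le> t") (simp_all add: mult.assoc)
  qed
  also have "\<dots> = C * (\<integral>\<^sup>+t\<in>{1..}. ennreal (\<tau> * exp (- \<tau> * t) * t ^ DIM('a)) \<partial>lborel)"
    by (rule nn_integral_cmult) simp
  finally show ?thesis
    by (simp only: C_def)
qed

lemma log_concave_fun_nn_integral_le_approx:
  fixes \<rho> :: "'a::euclidean_space \<Rightarrow> real"
  assumes lc: "log_concave_fun \<rho>" and bdd: "bdd_above (range \<rho>)" and M: "0 < Sup (range \<rho>)"
    and \<delta>: "0 < \<delta>" "\<delta> < \<tau>"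
  shows "(\<integral>\<^sup>+x. ennreal (\<rho> x) \<partial>lebesgue)
           \<le> ennreal (Sup (range \<rho>)) * emeasure lebesgue {x. exp (- \<tau>) * Sup (range \<rho>) \<le> \<rho> x}
             * (ennreal (1 - exp (- \<tau>)) + ennreal ((\<tau> / (\<tau> - \<delta>)) ^ DIM('a))
                  * (\<integral>\<^sup>+t\<in>{1..}. ennreal (\<tau> * exp (- \<tau> * t) * t ^ DIM('a)) \<partial>lborel))"
proof -
  define M where "M = Sup (range \<rho>)"
  define K where "K = {x. exp (- \<tau>) * M \<le> \<rho> x}"
  have \<tau>: "0 < \<tau>" "exp (- \<tau>) \<le> 1" and M: "0 < M"
    using \<delta> M by (simp_all add: M_def)
  have le_M: "\<rho> x \<le> M" for x
    unfolding M_def using bdd by (simp add: cSup_upper)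
  have "M * exp (- \<delta>) < M"
    using M \<delta> by simp
  then obtain x\<^sub>0 where x\<^sub>0: "M * exp (- \<delta>) \<le> \<rho> x\<^sub>0"
    using less_cSup_iff[of "range \<rho>" "M * exp (- \<delta>)"] bdd unfolding M_def by (auto intro: less_imp_le)
  have "(\<integral>\<^sup>+x. ennreal (\<rho> x) \<partial>lebesgue)
          \<le> ennreal (M * (1 - exp (- \<tau>))) * emeasure lebesgue K
            + ennreal M * emeasure lebesgue K * ennreal ((\<tau> / (\<tau> - \<delta>)) ^ DIM('a))
              * (\<integral>\<^sup>+t\<in>{1..}. ennreal (\<tau> * exp (- \<tau> * t) * t ^ DIM('a)) \<partial>lborel)"
    using nn_integral_le_superlevel_layers[OF log_concave_fun_borel_measurable[OF lc]
        log_concave_fun_nonneg[OF lc] le_M M \<tau>(1)]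
      log_concave_fun_superlevel_tail_le[OF lc M \<delta> x\<^sub>0]
    unfolding K_def by (meson add_left_mono order_trans)
  also have "\<dots> = ennreal M * emeasure lebesgue K * (ennreal (1 - exp (- \<tau>)) + ennreal ((\<tau> / (\<tau> - \<delta>)) ^ DIM('a))
                    * (\<integral>\<^sup>+t\<in>{1..}. ennreal (\<tau> * exp (- \<tau> * t) * t ^ DIM('a)) \<partial>lborel))"
    using M \<tau> by (simp add: ennreal_mult distrib_left mult_ac)
  finally show ?thesis
    by (simp only: M_def K_def)
qed

text \<open>\<open>0 < r 0\<close> excludes the case \<open>0 * \<infinity>\<close>, where \<open>ennreal\<close> multiplication is not continuous.\<close>
lemma ennreal_le_mult_limit_at_right:
  fixes x C :: ennreal and r :: "real \<Rightarrow> real"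
  assumes bound: "\<And>\<delta>. 0 < \<delta> \<Longrightarrow> \<delta> < \<epsilon> \<Longrightarrow> x \<le> C * ennreal (r \<delta>)"
    and "0 < \<epsilon>" and "(r \<longlongrightarrow> r 0) (at_right 0)" and "0 < r 0"
  shows "x \<le> C * ennreal (r 0)"
proof (rule tendsto_lowerbound[rotated])
  show "\<forall>\<^sub>F \<delta> in at_right 0. x \<le> C * ennreal (r \<delta>)"
    using assms(2) bound by (intro eventually_at_rightI[of 0 \<epsilon>]) auto
  show "((\<lambda>\<delta>. C * ennreal (r \<delta>)) \<longlongrightarrow> C * ennreal (r 0)) (at_right 0)"
    using assms(3,4) by (intro tendsto_mult_ennreal tendsto_const tendsto_ennrealI) auto
qed simp

lemma log_concave_fun_nn_integral_le:
  fixes \<rho> :: "'a::euclidean_space \<Rightarrow> real"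
  assumes lc: "log_concave_fun \<rho>" and bdd: "bdd_above (range \<rho>)" and M: "0 < Sup (range \<rho>)"
    and \<tau>: "0 < \<tau>"
  shows "(\<integral>\<^sup>+x. ennreal (\<rho> x) \<partial>lebesgue)
           \<le> ennreal (Sup (range \<rho>)
                * (real DIM('a) * integral {1..} (\<lambda>t. t ^ (DIM('a) - 1) * exp (- \<tau> * t)) + 1))
             * emeasure lebesgue {x. exp (- \<tau>) * Sup (range \<rho>) \<le> \<rho> x}"
proof -
  define I where "I = integral {1..} (\<lambda>t. t ^ (DIM('a) - 1) * exp (- \<tau> * t))"
  define C where "C = ennreal (Sup (range \<rho>)) * emeasure lebesgue {x. exp (- \<tau>) * Sup (range \<rho>) \<le> \<rho> x}"
  define r where "r \<delta> = (1 - exp (- \<tau>)) + (\<tau> / (\<tau> - \<delta>)) ^ DIM('a) * (exp (- \<tau>) + real DIM('a) * I)" for \<delta>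
  have I: "0 \<le> I"
    unfolding I_def by (rule integral_power_exp_atLeast_1_nonneg)
  have bound: "(\<integral>\<^sup>+x. ennreal (\<rho> x) \<partial>lebesgue) \<le> C * ennreal (r \<delta>)" if \<delta>: "0 < \<delta>" "\<delta> < \<tau>" for \<delta>
  proof -
    have "ennreal ((\<tau> / (\<tau> - \<delta>)) ^ DIM('a)) * ennreal (exp (- \<tau>) + real DIM('a) * I)
            = ennreal ((\<tau> / (\<tau> - \<delta>)) ^ DIM('a) * (exp (- \<tau>) + real DIM('a) * I))"
      using \<delta> I by (intro ennreal_mult[symmetric]) auto
    moreover have "ennreal (1 - exp (- \<tau>)) + ennreal ((\<tau> / (\<tau> - \<delta>)) ^ DIM('a) * (exp (- \<tau>) + real DIM('a) * I))
                     = ennreal (r \<delta>)"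
      unfolding r_def using \<tau> \<delta> I by (intro ennreal_plus[symmetric]) auto
    ultimately show ?thesis
      using log_concave_fun_nn_integral_le_approx[OF lc bdd M \<delta>]
      unfolding nn_integral_exp_moment_atLeast_1_eq_integral[OF \<tau> DIM_positive] C_def I_def by simp
  qed
  have lim: "(r \<longlongrightarrow> r 0) (at_right 0)"
    unfolding r_def using \<tau> by (auto intro!: tendsto_eq_intros)
  have pos: "0 < r 0"
    using \<tau> I by (simp add: r_def add_pos_nonneg)
  have "(\<integral>\<^sup>+x. ennreal (\<rho> x) \<partial>lebesgue) \<le> C * ennreal (r 0)"
    using bound \<tau> lim pos by (rule ennreal_le_mult_limit_at_right)
  also have "r 0 = real DIM('a) * I + 1"
    using \<tau> by (simp add: r_def)
  also have "C * ennreal (real DIM('a) * I + 1)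
               = ennreal (Sup (range \<rho>) * (real DIM('a) * I + 1))
                 * emeasure lebesgue {x. exp (- \<tau>) * Sup (range \<rho>) \<le> \<rho> x}"
  proof -
    have "ennreal (Sup (range \<rho>) * (real DIM('a) * I + 1))
            = ennreal (Sup (range \<rho>)) * ennreal (real DIM('a) * I + 1)"
      using M I by (intro ennreal_mult) auto
    then show ?thesis
      unfolding C_def by (simp only: ac_simps)
  qed
  finally show ?thesis
    by (simp only: I_def)
qed

theorem lemma3p1:
  fixes \<rho> :: "'a::euclidean_space \<Rightarrow> real" and \<mu> :: "'a measure" and \<tau> :: real
  assumes "\<tau> > 0"
    and "log_concave_fun \<rho>"
    and "\<mu> = density lebesgue (\<lambda>x. ennreal (\<rho> x))"
    and "prob_space \<mu>"
  shows "1 \<le> ennreal (Sup (range \<rho>)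
            * (real DIM('a) * integral {1..} (\<lambda>t. t ^ (DIM('a) - 1) * exp (- \<tau> * t)) + 1))
          * emeasure lebesgue {x. \<rho> x \<ge> exp (- \<tau>) * Sup (range \<rho>)}"
proof -
  note \<tau> = assms(1) and lc = assms(2)
  have [measurable]: "\<rho> \<in> borel_measurable lebesgue"
    by (rule log_concave_fun_borel_measurable[OF lc])
  have integral_1: "(\<integral>\<^sup>+x. ennreal (\<rho> x) \<partial>lebesgue) = 1"
    using prob_space.emeasure_space_1[OF assms(4)] assms(3) by (simp add: emeasure_density)
  then have bdd: "bdd_above (range \<rho>)"
    by (intro log_concave_fun_bdd_above[OF lc]) simp_all
  have "0 < Sup (range \<rho>)"
  proof (rule ccontr)
    assume "\<not> 0 < Sup (range \<rho>)"
    then have "ennreal (\<rho> x) = 0" for x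
      using cSup_upper[OF _ bdd, of "\<rho> x"] by (simp add: ennreal_eq_0_iff)
    with integral_1 show False
      by simp
  qed
  from log_concave_fun_nn_integral_le[OF lc bdd this \<tau>] integral_1 show ?thesis
    by simp
qed

end
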